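(* Consider the semi-discrete Hermite–DG Vlasov–Maxwell system $\frac{dy}{dt}=\mathcal{F}^N(y)$ on $\mathbb{R}^M$ described in the context, obtained with upwind numerical fluxes in the DG discretization of Maxwell's equations, with initial condition $y(0)$. Let $\{y^\tau\}_{\tau=1,\dots,T/\Delta t}$ be the sequence of approximate solutions produced by the ${N_{GL}}$-stage Gauss–Legendre method with step $\Delta t$ and $y^0=y(0)$, with stages $\mathcal{Y}_i$ and weights $b_i$. Then for every $\tau$, $$\mathcal{E}_{\mathbf{tot}}(y^{\tau+1})-\mathcal{E}_{\mathbf{tot}}(y^\tau)+\Delta t\sum_{i=1}^{{N_{GL}}}b_i\,\mathcal{E}_{\mathbf{bnd}}(\mathcal{Y}_i)\le 0.$$
   Context: Setting: the Vlasov–Maxwell system for $N_s$ plasma species with masses $m^s$, charges $q^s$, on a spatial domain $\Omega_x\subset\mathbb{R}^3$ partitioned into a uniform mesh of hexahedral cells $I$ with faces $\mathsf{f}$, and velocity space $\mathbb{R}^3$. In the Hermite–DG semi-discretization each distribution function is approximated as $f^{s,N}(x,v,t)=\sum_{n,m,p}\sum_{I,l}C^{s,I,l}_{n,m,p}(t)\Psi_{n,m,p}(\xi^s)\varphi^{I,l}(x)$ (asymmetrically weighted Hermite functions in velocity, piecewise polynomials of degree $\le N_{DG}$ on each cell in space) and the electromagnetic fields as piecewise polynomials $E^N(x,t)=\sum_{I,l}E^{I,l}(t)\varphi^{I,l}(x)$, $B^N(x,t)=\sum_{I,l}B^{I,l}(t)\varphi^{I,l}(x)$; the Vlasov equation uses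 upwind fluxes. The vector $y(t)\in\mathbb{R}^M$ of all coefficients $C^{s,I,l}_{n,m,p},E^{I,l},B^{I,l}$ satisfies an autonomous ODE $dy/dt=\mathcal{F}^N(y)$. Energies: $\mathcal{E}_{\mathbf{kin}}(y)=\frac12\sum_s m^s\sum_I\int_I\int_{\mathbb{R}^3}|v|^2f^{s,N}\,dv\,dx$ (linear in $y$); $\mathcal{E}_{E,B}(y)=\frac12(\omega_{ce}/\omega_{pe})^2\sum_I\int_I(|E^N|^2+|B^N|^2)\,dx$ (a quadratic form $y^\top Sy$ with $S$ symmetric); total energy $\mathcal{E}_{\mathbf{tot}}=\mathcal{E}_{\mathbf{kin}}+\mathcal{E}_{E,B}$; boundary energy flux $\mathcal{E}_{\mathbf{bnd}}(y)=\frac12\sum_s m^s\int_{\partial\Omega_x}\int_{\mathbb{R}^3}(n\cdot v)|v|^2f^{s,N}\,dv\,dS$ with $n$ the outward unit normal; jump term $\mathcal{E}_{\mathbf{jump}}(y)=(\omega_{ce}/\omega_{pe})^2\sum_{\mathsf{f}}\frac12\int_{\mathsf{f}}[\![U]\!]_{\mathsf{f}}^\top|\mathbb{F}|[\![U]\!]_{\mathsf{f}}\,dS\ge0$ for upwind Maxwell fluxes, where $U=(E^N,B^N)$, $[\![U]\!]_{\mathsf{f}}$ is its jump across face $\mathsf{f}$ and $|\mathbb{F}|$ is the fixed symmetric positive semidefinite matrix given by the sum of the absolute values of the Maxwell flux matrices. The semi-discrete system satisfies the energy law: along every solution, $\frac{d}{dt}\mathcal{E}_{\mathbf{tot}}(y(t))+\mathcal{E}_{\mathbf{bnd}}(y(t))=-\mathcal{E}_{\mathbf{jump}}(y(t))\le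 0$, for every $y(t)\in\mathbb{R}^M$. The ${N_{GL}}$-stage Gauss–Legendre method is the implicit Runge–Kutta method $\mathcal{Y}_i=y^\tau+\Delta t\sum_{j=1}^{{N_{GL}}}a_{ij}\mathcal{F}^N(\mathcal{Y}_j)$, $y^{\tau+1}=y^\tau+\Delta t\sum_i b_i\mathcal{F}^N(\mathcal{Y}_i)$, with $c_i$ the Gauss–Legendre nodes on $[0,1]$, $q_i(\sigma)=\prod_{j\neq i}(\sigma-c_j)$, $a_{ij}=\int_0^{c_i}q_j/q_j(c_j)$, $b_i=\int_0^1 q_i/q_i(c_i)$. *)

theory Defs
  imports "HOL-Analysis.Analysis"
begin

definition shifted_legendre :: "nat \<Rightarrow> real \<Rightarrow> real" where
  "shifted_legendre s x =
     (\<Sum>k\<le>s. (-1)^(s+k) * real (s choose k) * real ((s+k) choose k) * x^k)"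

definition gl_nodes :: "nat \<Rightarrow> (nat \<Rightarrow> real) \<Rightarrow> bool" where
  "gl_nodes s c \<longleftrightarrow> strict_mono_on {..<s} c \<and> (\<forall>i<s. shifted_legendre s (c i) = 0)"

definition lagr_q :: "nat \<Rightarrow> (nat \<Rightarrow> real) \<Rightarrow> nat \<Rightarrow> real \<Rightarrow> real" where
  "lagr_q s c i \<sigma> = (\<Prod>j\<in>{..<s} - {i}. \<sigma> - c j)"

definition gl_a :: "nat \<Rightarrow> (nat \<Rightarrow> real) \<Rightarrow> nat \<Rightarrow> nat \<Rightarrow> real" where
  "gl_a s c i j = integral {0..c i} (\<lambda>\<sigma>. lagr_q s c j \<sigma> / lagr_q s c j (c j))"

definition gl_b :: "nat \<Rightarrow> (nat \<Rightarrow> real) \<Rightarrow> nat \<Rightarrow> real" where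
  "gl_b s c i = integral {0..1} (\<lambda>\<sigma>. lagr_q s c i \<sigma> / lagr_q s c i (c i))"

end

theory Submission
  imports Defs "HOL-Computational_Algebra.Polynomial"
begin

(* The Gauss-Legendre method is a symplectic Runge-Kutta method with nonnegative weights:
   b_i a_ij + b_j a_ji = b_i b_j and b_i >= 0.  For such a method the increment of a quadratic
   energy E x = L x + B x x over one step is exactly dt * sum_i b_i (L (F Y_i) + 2 B (Y_i, F Y_i)),
   because the symplecticity condition makes the dt^2 term cancel; by the semi-discrete energy law
   each stage term equals -Ebnd Y_i - Ejump Y_i <= -Ebnd Y_i.
   Both properties of the coefficients follow from exactness of the quadrature (b, c) for
   polynomials of degree < 2s, which in turn comes from the orthogonality of the Rodrigues form
   (d/dx)^s (x^s (x - 1)^s) of the shifted Legendre polynomial to all polynomials of degree < s: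
   b_i is the quadrature of l_i^2, and the symplecticity condition is the quadrature of (L_i L_j)',
   where L_i is the antiderivative of the Lagrange basis polynomial l_i vanishing at 0. *)

definition poly_integral :: "real poly \<Rightarrow> real" where
  "poly_integral p = integral {0..1} (poly p)"

lemma integrable_on_poly [simp]: "poly (p :: real poly) integrable_on {a..b}"
  by (intro integrable_continuous_interval continuous_intros)

lemma poly_integral_add: "poly_integral (p + q) = poly_integral p + poly_integral q"
  unfolding poly_integral_def poly_add by (rule integral_add) auto

lemma poly_integral_smult: "poly_integral (smult a p) = a * poly_integral p"
  unfolding poly_integral_def poly_smult by (rule integral_mult_right)

lemma poly_integral_0 [simp]: "poly_integral 0 = 0"
  using poly_integral_smult[of 0 0] by simp

lemma poly_integral_sum: "poly_integral (\<Sum>i\<in>A. f i) = (\<Sum>i\<in>A. poly_integral (f i))"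
  by (induction A rule: infinite_finite_induct) (auto simp: poly_integral_add)

lemma integral_poly_pderiv:
  fixes p :: "real poly"
  assumes "a \<le> b"
  shows "integral {a..b} (poly (pderiv p)) = poly p b - poly p a"
proof (rule integral_unique, rule fundamental_theorem_of_calculus[OF assms])
  show "\<And>x. x \<in> {a..b} \<Longrightarrow> (poly p has_vector_derivative poly (pderiv p) x) (at x within {a..b})"
    by (simp add: has_field_derivative_at_within flip: has_real_derivative_iff_has_vector_derivative)
qed

lemma poly_integral_pderiv: "poly_integral (pderiv p) = poly p 1 - poly p 0"
  unfolding poly_integral_def by (rule integral_poly_pderiv) simp

lemma poly_integral_by_parts:
  "poly_integral (pderiv p * q) = poly p 1 * poly q 1 - poly p 0 * poly q 0 - poly_integral (p * pderiv q)"
  using poly_integral_pderiv[of "p * q"] by (simp add: pderiv_mult poly_integral_add mult.commute)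

lemma exists_poly_antiderivative:
  fixes p :: "real poly"
  obtains P where "pderiv P = p" "poly P 0 = 0" "degree P \<le> Suc (degree p)"
proof
  define P where "P = (\<Sum>i\<le>degree p. monom (coeff p i / real (Suc i)) (Suc i))"
  have "pderiv P = (\<Sum>i\<le>degree p. pderiv (monom (coeff p i / real (Suc i)) (Suc i)))"
    unfolding P_def using higher_pderiv_sum[of 1] by simp
  also have "\<dots> = (\<Sum>i\<le>degree p. monom (coeff p i) i)"
    by (simp add: pderiv_monom del: of_nat_Suc)
  also have "\<dots> = p" by (rule poly_as_sum_of_monoms)
  finally show "pderiv P = p" .
  show "poly P 0 = 0" by (simp add: P_def poly_sum poly_monom)
  show "degree P \<le> Suc (degree p)" unfolding P_def
    by (intro degree_sum_le) (auto intro: order_trans[OF degree_monom_le])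
qed

lemma higher_pderiv_eq_0: "degree p < k \<Longrightarrow> (pderiv ^^ k) p = 0"
  by (intro poly_eqI) (simp add: coeff_higher_pderiv coeff_eq_0)

lemma linear_power_dvd_pderiv:
  fixes p :: "real poly"
  assumes "[:-a, 1:] ^ Suc n dvd p"
  shows "[:-a, 1:] ^ n dvd pderiv p"
proof -
  obtain r where r: "p = [:-a, 1:] ^ Suc n * r" using assms by (auto simp: dvd_def)
  have "pderiv p = [:-a, 1:] ^ n * ([:-a, 1:] * pderiv r + smult (of_nat (Suc n)) r)"
    unfolding r pderiv_mult pderiv_power_Suc by (simp add: pderiv_pCons algebra_simps)
  then show ?thesis by simp
qed

lemma poly_higher_pderiv_eq_0_at_root:
  fixes p :: "real poly"
  assumes "[:-a, 1:] ^ n dvd p" "j < n"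
  shows "poly ((pderiv ^^ j) p) a = 0"
proof -
  have "[:-a, 1:] ^ (n - j) dvd (pderiv ^^ j) p"
    using \<open>j < n\<close>
  proof (induction j)
    case 0 then show ?case using assms(1) by simp
  next
    case (Suc j)
    then have "[:-a, 1:] ^ Suc (n - Suc j) dvd (pderiv ^^ j) p" by (simp add: Suc_diff_Suc)
    then show ?case by (simp add: linear_power_dvd_pderiv)
  qed
  then obtain r where "(pderiv ^^ j) p = [:-a, 1:] ^ Suc (n - Suc j) * r"
    using \<open>j < n\<close> by (auto simp: dvd_def Suc_diff_Suc)
  then show ?thesis by simp
qed

definition legendre_rodrigues :: "nat \<Rightarrow> real poly" where
  "legendre_rodrigues s = (pderiv ^^ s) (monom 1 s * [:-1, 1:] ^ s)"

lemma legendre_rodrigues_by_parts: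
  assumes "k \<le> s"
  shows "poly_integral (legendre_rodrigues s * q)
           = (-1) ^ k * poly_integral ((pderiv ^^ (s - k)) (monom 1 s * [:-1, 1:] ^ s) * (pderiv ^^ k) q)"
  using assms
proof (induction k)
  case 0 then show ?case by (simp add: legendre_rodrigues_def)
next
  case (Suc k)
  define W :: "real poly" where "W = monom 1 s * [:-1, 1:] ^ s"
  define f where "f = (pderiv ^^ (s - Suc k)) W"
  have "s - k = Suc (s - Suc k)" using Suc.prems by simp
  then have W_f: "(pderiv ^^ (s - k)) W = pderiv f" by (simp add: f_def)
  have "[:-0, 1:] ^ s dvd W" "[:-1, 1:] ^ s dvd W"
    by (simp_all add: W_def monom_altdef)
  then have "poly f 0 = 0" "poly f 1 = 0"
    using Suc.prems by (simp_all add: f_def poly_higher_pderiv_eq_0_at_root)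
  then have "poly_integral (pderiv f * (pderiv ^^ k) q) = - poly_integral (f * (pderiv ^^ Suc k) q)"
    by (simp add: poly_integral_by_parts)
  then show ?case using Suc by (simp flip: W_def add: W_f f_def)
qed

lemma legendre_rodrigues_orthogonal:
  assumes "degree q < s"
  shows "poly_integral (legendre_rodrigues s * q) = 0"
  using legendre_rodrigues_by_parts[of s s q] by (simp add: higher_pderiv_eq_0[OF assms])

lemma pochhammer_Suc_eq_fact_binomial:
  "pochhammer (real (Suc n)) s = fact s * real ((n + s) choose n)"
proof -
  have "fact (n + s) = (fact n :: real) * pochhammer (real (Suc n)) s"
    using pochhammer_product'[of "1::real" n s] by (simp add: pochhammer_fact add.commute)
  moreover have "fact n * fact s * real ((n + s) choose n) = (fact (n + s) :: real)"
    using binomial_fact_lemma[of n "n + s"] by (metis add_diff_cancel_left' le_add1 of_nat_fact of_nat_mult)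
  ultimately show ?thesis by (simp add: mult.assoc)
qed

lemma degree_legendre_rodrigues: "degree (legendre_rodrigues s) = s"
  by (simp add: legendre_rodrigues_def degree_higher_pderiv degree_mult_eq degree_monom_eq
      degree_linear_power)

lemma coeff_legendre_rodrigues:
  assumes "k \<le> s"
  shows "coeff (legendre_rodrigues s) k
           = fact s * ((-1) ^ (s + k) * real (s choose k) * real ((s + k) choose k))"
proof -
  have "coeff (monom 1 s * [:-1, 1:] ^ s) (k + s) = real (s choose k) * (-1) ^ (s - k)"
    using coeff_linear_poly_power[of k s "-1::real" 1] assms by (simp add: coeff_monom_mult)
  also have "(-1::real) ^ (s - k) = (-1) ^ (s + k)"
    by (rule neg_one_power_add_eq_neg_one_power_diff[OF assms, symmetric])
  finally have "coeff (legendre_rodrigues s) k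
                  = pochhammer (real (Suc k)) s * (real (s choose k) * (-1) ^ (s + k))"
    by (simp only: legendre_rodrigues_def coeff_higher_pderiv)
  then show ?thesis
    by (simp only: pochhammer_Suc_eq_fact_binomial ac_simps)
qed

lemma poly_legendre_rodrigues: "poly (legendre_rodrigues s) x = fact s * shifted_legendre s x"
  unfolding poly_altdef degree_legendre_rodrigues shifted_legendre_def sum_distrib_left
  by (intro sum.cong) (simp_all add: coeff_legendre_rodrigues mult.assoc)

lemma neg_one_power_mult_neg_one_power_add: "(-1 :: real) ^ s * (-1) ^ (s + k) = (-1) ^ k"
  by (metis neg_one_even_power neg_one_odd_power power_add mult_1 even_add)

lemma shifted_legendre_nonpos_neq_0:
  assumes "x \<le> 0"
  shows "shifted_legendre s x \<noteq> 0"
proof -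
  have "1 \<le> (\<Sum>k\<le>s. real (s choose k) * real ((s + k) choose k) * (-x) ^ k)"
    using member_le_sum[of 0 "{..s}" "\<lambda>k. real (s choose k) * real ((s + k) choose k) * (-x) ^ k"] assms
    by (simp add: zero_le_power)
  also have "\<dots> = (-1) ^ s * shifted_legendre s x"
    unfolding shifted_legendre_def sum_distrib_left
    by (intro sum.cong) (metis neg_one_power_mult_neg_one_power_add power_minus mult.assoc mult.commute)+
  finally show ?thesis by auto
qed

definition lagrange_basis :: "nat \<Rightarrow> (nat \<Rightarrow> real) \<Rightarrow> nat \<Rightarrow> real poly" where
  "lagrange_basis s c k = smult (1 / lagr_q s c k (c k)) (\<Prod>j\<in>{..<s} - {k}. [:- c j, 1:])"

lemma poly_lagrange_basis: "poly (lagrange_basis s c k) = (\<lambda>x. lagr_q s c k x / lagr_q s c k (c k))"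
  by (simp add: lagrange_basis_def lagr_q_def poly_prod fun_eq_iff)

lemma degree_lagrange_basis:
  assumes "k < s"
  shows "degree (lagrange_basis s c k) < s"
proof -
  have "degree (\<Prod>j\<in>{..<s} - {k}. [:- c j, 1:]) \<le> sum (degree \<circ> (\<lambda>j. [:- c j, 1:])) ({..<s} - {k})"
    by (rule degree_prod_sum_le) simp
  also have "\<dots> < s" using assms by simp
  finally show ?thesis
    unfolding lagrange_basis_def using degree_smult_le le_less_trans by blast
qed

lemma lagrange_basis_at_node:
  assumes "inj_on c {..<s}" "i < s" "k < s"
  shows "poly (lagrange_basis s c k) (c i) = (if i = k then 1 else 0)"
proof -
  have "lagr_q s c k (c k) \<noteq> 0"
    using assms by (auto simp: lagr_q_def inj_on_eq_iff)
  moreover have "lagr_q s c k (c i) = 0" if "i \<noteq> k"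
    using assms that by (auto simp: lagr_q_def)
  ultimately show ?thesis by (simp add: poly_lagrange_basis)
qed

lemma lagrange_interpolation:
  assumes "inj_on c {..<s}" "degree p < s"
  shows "p = (\<Sum>k<s. smult (poly p (c k)) (lagrange_basis s c k))"
proof (rule poly_eqI_degree)
  show "poly p x = poly (\<Sum>k<s. smult (poly p (c k)) (lagrange_basis s c k)) x"
    if "x \<in> c ` {..<s}" for x
  proof -
    obtain i where i: "i < s" "x = c i" using \<open>x \<in> c ` {..<s}\<close> by auto
    have "poly (\<Sum>k<s. smult (poly p (c k)) (lagrange_basis s c k)) (c i)
            = (\<Sum>k<s. if k = i then poly p (c k) else 0)"
      unfolding poly_sum poly_smult
      by (intro sum.cong) (auto simp: lagrange_basis_at_node[OF assms(1) i(1)])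
    then show ?thesis using i by simp
  qed
  show "degree p < card (c ` {..<s})"
    using assms by (simp add: card_image)
  have "degree (smult (poly p (c k)) (lagrange_basis s c k)) < s" if "k < s" for k
    using degree_smult_le[of "poly p (c k)"] degree_lagrange_basis[OF that, of c] by (meson le_less_trans)
  then have "degree (\<Sum>k<s. smult (poly p (c k)) (lagrange_basis s c k)) \<le> s - 1"
    by (intro degree_sum_le) fastforce+
  then show "degree (\<Sum>k<s. smult (poly p (c k)) (lagrange_basis s c k)) < card (c ` {..<s})"
    using assms by (simp add: card_image)
qed

lemma gl_b_eq_poly_integral: "gl_b s c k = poly_integral (lagrange_basis s c k)"
  unfolding gl_b_def poly_integral_def poly_lagrange_basis ..

lemma interpolatory_quadrature_exact:
  assumes "inj_on c {..<s}" "degree p < s"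
  shows "poly_integral p = (\<Sum>k<s. gl_b s c k * poly p (c k))"
  by (subst lagrange_interpolation[OF assms])
    (simp add: poly_integral_sum poly_integral_smult gl_b_eq_poly_integral mult.commute)

(* The hypothesis 0 <= c i matters: for c i < 0 the box {0..c i} is empty. *)
lemma gl_a_eq_antiderivative:
  assumes "0 \<le> c i" "pderiv L = lagrange_basis s c j" "poly L 0 = 0"
  shows "gl_a s c i j = poly L (c i)"
proof -
  have "gl_a s c i j = integral {0..c i} (poly (pderiv L))"
    unfolding gl_a_def assms(2) poly_lagrange_basis ..
  then show ?thesis using integral_poly_pderiv[OF assms(1), of L] assms(3) by simp
qed

lemma gl_b_eq_antiderivative:
  assumes "pderiv L = lagrange_basis s c j" "poly L 0 = 0"
  shows "gl_b s c j = poly L 1"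
  using poly_integral_pderiv[of L] assms by (simp add: gl_b_eq_poly_integral)

context
  fixes s :: nat and c :: "nat \<Rightarrow> real"
  assumes nodes: "gl_nodes s c"
begin

lemma gl_nodes_inj: "inj_on c {..<s}"
  using nodes by (auto simp: gl_nodes_def intro: strict_mono_on_imp_inj_on)

lemma gl_nodes_pos: "i < s \<Longrightarrow> 0 < c i"
  using nodes shifted_legendre_nonpos_neq_0 unfolding gl_nodes_def by (meson not_less)

lemma legendre_rodrigues_at_gl_node: "i < s \<Longrightarrow> poly (legendre_rodrigues s) (c i) = 0"
  using nodes by (simp add: gl_nodes_def poly_legendre_rodrigues)

lemma gauss_legendre_exact:
  assumes "degree p < 2 * s"
  shows "poly_integral p = (\<Sum>k<s. gl_b s c k * poly p (c k))"
proof -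
  define R where "R = legendre_rodrigues s"
  define q where "q = p div R"
  define r where "r = p mod R"
  have "s > 0" using assms by simp
  then have "R \<noteq> 0" and deg_R: "degree R = s"
    using degree_legendre_rodrigues[of s] by (auto simp: R_def)
  have p_eq: "p = R * q + r" by (simp add: q_def r_def)
  have deg_r: "degree r < s"
    using degree_mod_less[OF \<open>R \<noteq> 0\<close>, of p] \<open>s > 0\<close> deg_R by (auto simp: r_def)
  have deg_q: "degree q < s"
  proof (cases "q = 0")
    case False
    then have "degree (R * q) = s + degree q"
      using \<open>R \<noteq> 0\<close> deg_R by (simp add: degree_mult_eq)
    then have "degree p = s + degree q"
      using deg_r by (simp add: p_eq degree_add_eq_left)
    then show ?thesis using assms by simp
  qed (use \<open>s > 0\<close> in simp)
  have "poly_integral p = poly_integral r"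
    using legendre_rodrigues_orthogonal[OF deg_q] by (simp add: p_eq R_def poly_integral_add)
  also have "\<dots> = (\<Sum>k<s. gl_b s c k * poly r (c k))"
    by (rule interpolatory_quadrature_exact[OF gl_nodes_inj deg_r])
  also have "\<dots> = (\<Sum>k<s. gl_b s c k * poly p (c k))"
    by (intro sum.cong) (simp_all add: p_eq R_def legendre_rodrigues_at_gl_node)
  finally show ?thesis .
qed

lemma gl_b_nonneg:
  assumes "k < s"
  shows "0 \<le> gl_b s c k"
proof -
  let ?l = "lagrange_basis s c k"
  have "degree (?l * ?l) < 2 * s"
    using degree_mult_le[of ?l ?l] degree_lagrange_basis[OF assms, where c = c] by linarith
  then have "poly_integral (?l * ?l) = (\<Sum>i<s. gl_b s c i * (poly ?l (c i) * poly ?l (c i)))"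
    by (simp add: gauss_legendre_exact)
  also have "\<dots> = (\<Sum>i<s. if i = k then gl_b s c i else 0)"
    by (intro sum.cong) (simp_all add: lagrange_basis_at_node[OF gl_nodes_inj _ assms])
  also have "\<dots> = gl_b s c k"
    using assms by simp
  finally show ?thesis
    by (metis poly_integral_def integral_nonneg integrable_on_poly poly_mult zero_le_square)
qed

lemma gl_symplectic:
  assumes i: "i < s" and j: "j < s"
  shows "gl_b s c i * gl_a s c i j + gl_b s c j * gl_a s c j i = gl_b s c i * gl_b s c j"
proof -
  obtain Li where Li: "pderiv Li = lagrange_basis s c i" "poly Li 0 = 0" "degree Li \<le> s"
    using exists_poly_antiderivative[of "lagrange_basis s c i"] degree_lagrange_basis[OF i]
    by (metis Suc_leI order_trans)
  obtain Lj where Lj: "pderiv Lj = lagrange_basis s c j" "poly Lj 0 = 0" "degree Lj \<le> s"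
    using exists_poly_antiderivative[of "lagrange_basis s c j"] degree_lagrange_basis[OF j]
    by (metis Suc_leI order_trans)
  have "degree (pderiv (Li * Lj)) < 2 * s"
    using degree_mult_le[of Li Lj] Li(3) Lj(3) i by (simp add: degree_pderiv)
  then have "poly_integral (pderiv (Li * Lj)) = (\<Sum>k<s. gl_b s c k * poly (pderiv (Li * Lj)) (c k))"
    by (rule gauss_legendre_exact)
  also have "\<dots> = (\<Sum>k<s. (if k = i then gl_b s c i * poly Lj (c i) else 0)
                        + (if k = j then gl_b s c j * poly Li (c j) else 0))"
    by (intro sum.cong)
      (auto simp: pderiv_mult Li(1) Lj(1) lagrange_basis_at_node[OF gl_nodes_inj] i j algebra_simps)
  also have "\<dots> = gl_b s c i * poly Lj (c i) + gl_b s c j * poly Li (c j)"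
    using i j by (simp add: sum.distrib)
  also have "\<dots> = gl_b s c i * gl_a s c i j + gl_b s c j * gl_a s c j i"
    using gl_a_eq_antiderivative gl_nodes_pos i j Li Lj by (simp add: less_imp_le)
  finally show ?thesis
    using poly_integral_pderiv[of "Li * Lj"] gl_b_eq_antiderivative Li Lj by simp
qed

end

lemma bilinear_matrix_form: "bilinear (\<lambda>u v. u \<bullet> (A *v v))"
  for A :: "real ^ 'n ^ 'm"
  unfolding bilinear_def
  by (auto intro!: linearI simp: inner_add_left inner_add_right matrix_vector_right_distrib
      matrix_vector_mult_scaleR)

lemma symmetric_matrix_form:
  fixes A :: "real ^ 'n ^ 'n"
  assumes "transpose A = A"
  shows "u \<bullet> (A *v v) = v \<bullet> (A *v u)"
  by (metis assms dot_lmul_matrix inner_commute transpose_matrix_vector)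

lemma quadratic_along_line_has_derivative:
  fixes L :: "'a::real_vector \<Rightarrow> real" and B :: "'a \<Rightarrow> 'a \<Rightarrow> real"
  assumes "linear L" "bilinear B"
  shows "((\<lambda>t. L (x + t *\<^sub>R v) + B (x + t *\<^sub>R v) (x + t *\<^sub>R v))
           has_real_derivative L v + B x v + B v x) (at 0)"
proof -
  have "L (x + t *\<^sub>R v) + B (x + t *\<^sub>R v) (x + t *\<^sub>R v)
          = (L x + B x x) + t * (L v + B x v + B v x) + t\<^sup>2 * B v v" for t
    using assms
    by (simp add: linear_add linear_scale bilinear_ladd bilinear_radd bilinear_lmul bilinear_rmul
        power2_eq_square algebra_simps)
  then show ?thesis
    by (simp only:) (auto intro!: derivative_eq_intros)
qed

lemma quadratic_directional_derivative:
  fixes L :: "'a::real_vector \<Rightarrow> real" and B :: "'a \<Rightarrow> 'a \<Rightarrow> real"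
  assumes "linear L" "bilinear B" "\<And>u v. B u v = B v u"
    and "((\<lambda>t. L (x + t *\<^sub>R v) + B (x + t *\<^sub>R v) (x + t *\<^sub>R v)) has_real_derivative D) (at 0)"
  shows "L v + 2 * B x v = D"
  using DERIV_unique[OF quadratic_along_line_has_derivative[OF assms(1,2)] assms(4)] assms(3)[of v x]
  by simp

lemma symplectic_rk_quadratic_increment:
  fixes L :: "'a::real_vector \<Rightarrow> real" and B :: "'a \<Rightarrow> 'a \<Rightarrow> real"
    and a :: "nat \<Rightarrow> nat \<Rightarrow> real" and b :: "nat \<Rightarrow> real" and G Y :: "nat \<Rightarrow> 'a"
  assumes "linear L" "bilinear B" and B_sym: "\<And>u v. B u v = B v u"
    and symplectic: "\<And>i j. i < s \<Longrightarrow> j < s \<Longrightarrow> b i * a i j + b j * a j i = b i * b j"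
    and stages: "\<And>i. i < s \<Longrightarrow> Y i = y0 + h *\<^sub>R (\<Sum>j<s. a i j *\<^sub>R G j)"
    and step: "y1 = y0 + h *\<^sub>R (\<Sum>i<s. b i *\<^sub>R G i)"
  shows "(L y1 + B y1 y1) - (L y0 + B y0 y0) = h * (\<Sum>i<s. b i * (L (G i) + 2 * B (Y i) (G i)))"
proof -
  interpret left: linear "\<lambda>u. B u v" for v using \<open>bilinear B\<close> by (simp add: bilinear_def)
  interpret right: linear "\<lambda>v. B u v" for u using \<open>bilinear B\<close> by (simp add: bilinear_def)
  define V where "V = (\<Sum>i<s. b i *\<^sub>R G i)"
  define T where "T = (\<Sum>i<s. \<Sum>j<s. b i * a i j * B (G j) (G i))"
  have "(L y1 + B y1 y1) - (L y0 + B y0 y0) = h * L V + 2 * h * B y0 V + h\<^sup>2 * B V V"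
    using \<open>linear L\<close>
    by (simp add: step[folded V_def] linear_add linear_scale left.add right.add left.scale
        right.scale B_sym[of V y0] power2_eq_square algebra_simps)
  moreover have "L V = (\<Sum>i<s. b i * L (G i))"
    using \<open>linear L\<close> by (simp add: V_def linear_sum linear_scale)
  moreover have "B y0 V = (\<Sum>i<s. b i * B (Y i) (G i)) - h * T"
  proof -
    have y0_Y: "B y0 (G i) = B (Y i) (G i) - h * (\<Sum>j<s. a i j * B (G j) (G i))" if "i < s" for i
      by (simp add: stages[OF that] left.add left.scale left.sum)
    have "B y0 V = (\<Sum>i<s. b i * B y0 (G i))"
      by (simp add: V_def right.sum right.scale)
    also have "\<dots> = (\<Sum>i<s. b i * B (Y i) (G i) - h * (\<Sum>j<s. b i * a i j * B (G j) (G i)))"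
      by (intro sum.cong) (simp_all add: y0_Y right_diff_distrib sum_distrib_left mult_ac)
    also have "\<dots> = (\<Sum>i<s. b i * B (Y i) (G i)) - h * T"
      by (simp add: T_def sum_subtractf sum_distrib_left)
    finally show ?thesis .
  qed
  moreover have "B V V = 2 * T"
  proof -
    have "B V V = (\<Sum>i<s. \<Sum>j<s. b i * b j * B (G j) (G i))"
      by (simp add: V_def left.sum left.scale right.sum right.scale sum_distrib_left mult_ac)
    also have "\<dots> = (\<Sum>i<s. \<Sum>j<s. (b i * a i j + b j * a j i) * B (G j) (G i))"
      by (intro sum.cong refl) (simp add: symplectic)
    also have "\<dots> = T + (\<Sum>i<s. \<Sum>j<s. b j * a j i * B (G j) (G i))"
      by (simp add: T_def distrib_right sum.distrib)
    also have "(\<Sum>i<s. \<Sum>j<s. b j * a j i * B (G j) (G i)) = T"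
      unfolding T_def by (subst sum.swap) (intro sum.cong refl, metis B_sym)
    finally show ?thesis by simp
  qed
  ultimately show ?thesis
    by (simp add: power2_eq_square algebra_simps sum.distrib sum_distrib_left)
qed

theorem proposition1:
  fixes F :: "real^'m \<Rightarrow> real^'m"
    and Ekin Ebnd Ejump :: "real^'m \<Rightarrow> real"
    and S :: "real^'m^'m"
    and s K :: nat and c :: "nat \<Rightarrow> real" and dt :: real
    and y :: "nat \<Rightarrow> real^'m" and Y :: "nat \<Rightarrow> nat \<Rightarrow> real^'m"
  defines "Etot \<equiv> (\<lambda>x. Ekin x + x \<bullet> (S *v x))"
  assumes lin_kin: "linear Ekin"
    and S_sym: "transpose S = S"
    and lin_bnd: "linear Ebnd"
    and jump_nonneg: "\<And>x. Ejump x \<ge> 0"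
    and energy_law: "\<And>x. ((\<lambda>t. Etot (x + t *\<^sub>R F x)) has_real_derivative
                              (- Ebnd x - Ejump x)) (at 0)"
    and s_pos: "s \<ge> 1"
    and nodes: "gl_nodes s c"
    and dt_pos: "dt > 0"
    and stages: "\<And>\<tau> i. \<tau> < K \<Longrightarrow> i < s \<Longrightarrow>
                   Y \<tau> i = y \<tau> + dt *\<^sub>R (\<Sum>j<s. gl_a s c i j *\<^sub>R F (Y \<tau> j))"
    and step: "\<And>\<tau>. \<tau> < K \<Longrightarrow>
                   y (Suc \<tau>) = y \<tau> + dt *\<^sub>R (\<Sum>i<s. gl_b s c i *\<^sub>R F (Y \<tau> i))"
  shows "\<forall>\<tau><K. Etot (y (Suc \<tau>)) - Etot (y \<tau>)
                + dt * (\<Sum>i<s. gl_b s c i * Ebnd (Y \<tau> i)) \<le> 0"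
proof (intro allI impI)
  fix \<tau> assume \<tau>: "\<tau> < K"
  define B where "B = (\<lambda>u v. u \<bullet> (S *v v))"
  have B: "bilinear B" unfolding B_def by (rule bilinear_matrix_form)
  have B_sym: "B u v = B v u" for u v
    unfolding B_def by (rule symmetric_matrix_form[OF S_sym])
  have Etot_eq: "Etot x = Ekin x + B x x" for x
    by (simp add: Etot_def B_def)
  have law: "Ekin (F x) + 2 * B x (F x) = - Ebnd x - Ejump x" for x
    using energy_law[of x] unfolding Etot_eq by (rule quadratic_directional_derivative[OF lin_kin B B_sym])
  have "Etot (y (Suc \<tau>)) - Etot (y \<tau>)
          = dt * (\<Sum>i<s. gl_b s c i * (Ekin (F (Y \<tau> i)) + 2 * B (Y \<tau> i) (F (Y \<tau> i))))"
    unfolding Etot_eq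
    by (rule symplectic_rk_quadratic_increment[OF lin_kin B B_sym gl_symplectic[OF nodes]
          stages[OF \<tau>] step[OF \<tau>]])
  also have "\<dots> \<le> dt * (\<Sum>i<s. gl_b s c i * - Ebnd (Y \<tau> i))"
    using gl_b_nonneg[OF nodes] jump_nonneg dt_pos
    by (intro mult_left_mono sum_mono) (auto simp: law)
  finally show "Etot (y (Suc \<tau>)) - Etot (y \<tau>) + dt * (\<Sum>i<s. gl_b s c i * Ebnd (Y \<tau> i)) \<le> 0"
    by (simp add: sum_negf)
qed

end
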